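(* Let $I,J\subset\mathbb{R}$ be intervals, $f:I\times J\to I$, $f_\lambda(x)=f(x,\lambda)$, $\lambda_0\in J$, $f_0=f_{\lambda_0}$. Assume: (H1) $f$ is a $C^1$ family of $C^2$ interval maps; (H2) $f_0$ is not constant on any interval; (H3) $f_0$ has at most one of: (a) a non-hyperbolic fixed point or periodic orbit, which as $\lambda$ varies is a generic codimension-one period-doubling or saddle-node bifurcation; (b) one critical point which constitutes a tangency between stable and unstable manifolds of fixed points or periodic orbits, generic in that as $\lambda$ varies through $\lambda_0$ the critical point moves from one side of the periodic point to the other; (H4) for each $\lambda$, $x_\lambda$ is a repelling fixed point of $f_\lambda$, $x_0:=x_{\lambda_0}$, and $y$ is a homoclinic point to $x_0$ for $f_0$; (H5) the homoclinic orbit containing $y$ at $\lambda_0$ contains only one critical point of $f_0$; (H6) $w$ is a homoclinic tangency point to $x_0$ for $f_0$ contained in at least one homoclinic orbit $(z_{-k})_{k\ge0}$, with $w=z_{-L}$. If $(w,\lambda_0)$ is a chain explosion point, then for every $k\ge L$ (i.e. every preimage $z_{-k}$ of $w$ in this homoclinic orbit), $(z_{-k},\lambda_0)$ is a chain explosion point.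
   Context: An $\epsilon$-chain for $g$ from $x$ to $y$: $z_0=x,\dots,z_N=y$ with $|g(z_{n-1})-z_n|<\epsilon$; $x$ is chain recurrent if for every $\epsilon>0$ there is such a chain from $x$ to itself with $N>0$. $(x,\lambda_0)$ is a chain explosion point if $x$ is chain recurrent for $f_{\lambda_0}$ but some neighborhood of $x$ contains no chain recurrent point of $f_\lambda$ for all $\lambda$ on one side of $\lambda_0$. For a repelling fixed point $x_0$, $y$ is homoclinic to $x_0$ if $y$ lies in the unstable manifold of $x_0$ and $f_0^K(y)=x_0$ for some $K>0$. A homoclinic orbit is a sequence $(z_{-k})_{k\ge0}$ with $z_0=x_0$, $z_{-K}=y$ for some $K$, $f_0(z_{-k})=z_{-k+1}$, $z_{-k}\to x_0$; $w=z_{-L}$ is a homoclinic tangency point if the graph of $f_0$ has a horizontal tangent at $w$. *)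

theory Defs
  imports "HOL-Analysis.Analysis"
begin

definition slice :: "(real \<Rightarrow> real \<Rightarrow> real) \<Rightarrow> real \<Rightarrow> real \<Rightarrow> real" where
  "slice f l = (\<lambda>x. f x l)"

text \<open>(H1): C1 family of C2 interval maps.  D1, D2 are the first and second x-derivatives,
  Dl the lambda-derivative; the family is C1 in (x,lambda) (continuous partials), each map is C2.\<close>
definition C1_family_C2 ::
  "real set \<Rightarrow> real set \<Rightarrow> (real \<Rightarrow> real \<Rightarrow> real) \<Rightarrow> (real \<Rightarrow> real \<Rightarrow> real) \<Rightarrow>
   (real \<Rightarrow> real \<Rightarrow> real) \<Rightarrow> (real \<Rightarrow> real \<Rightarrow> real) \<Rightarrow> bool" where
  "C1_family_C2 I J f D1 D2 Dl \<longleftrightarrow>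
     (\<forall>x\<in>I. \<forall>l\<in>J.
        ((\<lambda>y. f y l) has_real_derivative D1 x l) (at x within I) \<and>
        ((\<lambda>y. D1 y l) has_real_derivative D2 x l) (at x within I) \<and>
        ((\<lambda>m. f x m) has_real_derivative Dl x l) (at l within J)) \<and>
     continuous_on (I \<times> J) (\<lambda>(x, l). D1 x l) \<and>
     continuous_on (I \<times> J) (\<lambda>(x, l). Dl x l) \<and>
     (\<forall>l\<in>J. continuous_on I (\<lambda>x. D2 x l))"

definition not_const_on_intervals :: "(real \<Rightarrow> real) \<Rightarrow> real set \<Rightarrow> bool" where
  "not_const_on_intervals g I \<longleftrightarrow>
     (\<forall>a b. a < b \<and> {a..b} \<subseteq> I \<longrightarrow> \<not> (\<forall>x\<in>{a..b}. g x = g a))"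

definition min_period :: "(real \<Rightarrow> real) \<Rightarrow> real \<Rightarrow> nat \<Rightarrow> bool" where
  "min_period g p n \<longleftrightarrow> 0 < n \<and> (g ^^ n) p = p \<and> (\<forall>m. 0 < m \<and> m < n \<longrightarrow> (g ^^ m) p \<noteq> p)"

definition orbit :: "(real \<Rightarrow> real) \<Rightarrow> real \<Rightarrow> nat \<Rightarrow> real set" where
  "orbit g p n = {(g ^^ i) p | i. i < n}"

text \<open>Derivative of f_l^n at p (chain rule).\<close>
definition multiplier :: "(real \<Rightarrow> real \<Rightarrow> real) \<Rightarrow> (real \<Rightarrow> real \<Rightarrow> real) \<Rightarrow> real \<Rightarrow> nat \<Rightarrow> real \<Rightarrow> real" where
  "multiplier f D1 l n p = (\<Prod>i<n. D1 ((slice f l ^^ i) p) l)"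

definition nonhyp_pts :: "real set \<Rightarrow> (real \<Rightarrow> real \<Rightarrow> real) \<Rightarrow> (real \<Rightarrow> real \<Rightarrow> real) \<Rightarrow> real \<Rightarrow> real set" where
  "nonhyp_pts I f D1 l = {p \<in> I. \<exists>n. min_period (slice f l) p n \<and> \<bar>multiplier f D1 l n p\<bar> = 1}"

definition unstable_set :: "(real \<Rightarrow> real) \<Rightarrow> real set \<Rightarrow> real set \<Rightarrow> real set" where
  "unstable_set g I Orb = {y. \<exists>z::nat \<Rightarrow> real. z 0 = y \<and> (\<forall>k. z k \<in> I \<and> g (z (Suc k)) = z k) \<and>
                              (\<lambda>k. infdist (z k) Orb) \<longlonglongrightarrow> 0}"

text \<open>Critical points of f_l which are tangencies of the unstable manifold of one periodic orbit
  with the stable manifold (preimages) of another.\<close>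
definition tangency_pts :: "real set \<Rightarrow> (real \<Rightarrow> real \<Rightarrow> real) \<Rightarrow> (real \<Rightarrow> real \<Rightarrow> real) \<Rightarrow> real \<Rightarrow> real set" where
  "tangency_pts I f D1 l = {c \<in> I. D1 c l = 0 \<and>
      (\<exists>p1 n1 p2 n2 m. p1 \<in> I \<and> min_period (slice f l) p1 n1 \<and> p2 \<in> I \<and> min_period (slice f l) p2 n2 \<and>
          c \<in> unstable_set (slice f l) I (orbit (slice f l) p1 n1) \<and> (slice f l ^^ m) c = p2)}"

text \<open>Generic saddle-node at p of period n: multiplier 1, nonzero second x-derivative of f^n,
  nonzero lambda-derivative of f^n.\<close>
definition generic_saddle_node ::
  "real set \<Rightarrow> real set \<Rightarrow> (real \<Rightarrow> real \<Rightarrow> real) \<Rightarrow> (real \<Rightarrow> real \<Rightarrow> real) \<Rightarrow> real \<Rightarrow> real \<Rightarrow> nat \<Rightarrow> bool" where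
  "generic_saddle_node I J f D1 l0 p n \<longleftrightarrow>
     multiplier f D1 l0 n p = 1 \<and>
     (\<exists>s. s \<noteq> 0 \<and> ((\<lambda>x. multiplier f D1 l0 n x) has_real_derivative s) (at p within I)) \<and>
     (\<exists>t. t \<noteq> 0 \<and> ((\<lambda>l. (slice f l ^^ n) p) has_real_derivative t) (at l0 within J))"

definition generic_period_doubling ::
  "real set \<Rightarrow> real set \<Rightarrow> (real \<Rightarrow> real \<Rightarrow> real) \<Rightarrow> (real \<Rightarrow> real \<Rightarrow> real) \<Rightarrow> real \<Rightarrow> real \<Rightarrow> nat \<Rightarrow> bool" where
  "generic_period_doubling I J f D1 l0 p n \<longleftrightarrow>
     multiplier f D1 l0 n p = -1 \<and>
     (\<exists>P :: real \<Rightarrow> real. \<exists>\<delta>>0. P l0 = p \<and> continuous (at l0) P \<and>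
        (\<forall>l. \<bar>l - l0\<bar> < \<delta> \<longrightarrow> l \<in> J \<and> P l \<in> I \<and> (slice f l ^^ n) (P l) = P l) \<and>
        (\<exists>r. r \<noteq> 0 \<and> ((\<lambda>l. multiplier f D1 l n (P l)) has_real_derivative r) (at l0)))"

definition generic_tangency ::
  "real set \<Rightarrow> real set \<Rightarrow> (real \<Rightarrow> real \<Rightarrow> real) \<Rightarrow> (real \<Rightarrow> real \<Rightarrow> real) \<Rightarrow> real \<Rightarrow> real \<Rightarrow> bool" where
  "generic_tangency I J f D1 l0 c \<longleftrightarrow>
     (\<exists>p1 n1 q n m. p1 \<in> I \<and> min_period (slice f l0) p1 n1 \<and> q \<in> I \<and> min_period (slice f l0) q n \<and>
        c \<in> unstable_set (slice f l0) I (orbit (slice f l0) p1 n1) \<and> (slice f l0 ^^ m) c = q \<and>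
        (\<exists>C Q :: real \<Rightarrow> real. \<exists>\<delta>>0. \<exists>s::real. (s = 1 \<or> s = -1) \<and>
           C l0 = c \<and> Q l0 = q \<and> continuous (at l0) C \<and> continuous (at l0) Q \<and>
           (\<forall>l. \<bar>l - l0\<bar> < \<delta> \<longrightarrow> l \<in> J \<and> C l \<in> I \<and> D1 (C l) l = 0 \<and> Q l \<in> I \<and>
                 (slice f l ^^ n) (Q l) = Q l) \<and>
           (\<forall>l. l0 - \<delta> < l \<and> l < l0 \<longrightarrow> s * ((slice f l ^^ m) (C l) - Q l) < 0) \<and>
           (\<forall>l. l0 < l \<and> l < l0 + \<delta> \<longrightarrow> s * ((slice f l ^^ m) (C l) - Q l) > 0)))"

definition H3 :: "real set \<Rightarrow> real set \<Rightarrow> (real \<Rightarrow> real \<Rightarrow> real) \<Rightarrow> (real \<Rightarrow> real \<Rightarrow> real) \<Rightarrow> real \<Rightarrow> bool" where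
  "H3 I J f D1 l0 \<longleftrightarrow>
     (nonhyp_pts I f D1 l0 = {} \<and> tangency_pts I f D1 l0 = {}) \<or>
     (tangency_pts I f D1 l0 = {} \<and>
        (\<exists>p n. p \<in> I \<and> min_period (slice f l0) p n \<and> nonhyp_pts I f D1 l0 = orbit (slice f l0) p n \<and>
           (generic_saddle_node I J f D1 l0 p n \<or> generic_period_doubling I J f D1 l0 p n))) \<or>
     (nonhyp_pts I f D1 l0 = {} \<and> (\<exists>c. tangency_pts I f D1 l0 = {c} \<and> generic_tangency I J f D1 l0 c))"

definition homoclinic_point :: "(real \<Rightarrow> real) \<Rightarrow> real set \<Rightarrow> real \<Rightarrow> real \<Rightarrow> bool" where
  "homoclinic_point g I x0 y \<longleftrightarrow> y \<in> unstable_set g I {x0} \<and> (\<exists>K>0. (g ^^ K) y = x0)"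

text \<open>A homoclinic orbit (z_{-k})_{k>=0} is represented by z k = z_{-k}.\<close>
definition homoclinic_orbit :: "(real \<Rightarrow> real) \<Rightarrow> real set \<Rightarrow> real \<Rightarrow> (nat \<Rightarrow> real) \<Rightarrow> bool" where
  "homoclinic_orbit g I x0 z \<longleftrightarrow> z 0 = x0 \<and> (\<forall>k. z k \<in> I \<and> g (z (Suc k)) = z k) \<and> z \<longlonglongrightarrow> x0"

definition eps_chain :: "(real \<Rightarrow> real) \<Rightarrow> real set \<Rightarrow> real \<Rightarrow> real \<Rightarrow> real \<Rightarrow> nat \<Rightarrow> bool" where
  "eps_chain g I \<epsilon> x y N \<longleftrightarrow>
     (\<exists>z::nat \<Rightarrow> real. z 0 = x \<and> z N = y \<and> (\<forall>i\<le>N. z i \<in> I) \<and> (\<forall>i<N. \<bar>g (z i) - z (Suc i)\<bar> < \<epsilon>))"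

definition chain_recurrent :: "(real \<Rightarrow> real) \<Rightarrow> real set \<Rightarrow> real \<Rightarrow> bool" where
  "chain_recurrent g I x \<longleftrightarrow> x \<in> I \<and> (\<forall>\<epsilon>>0. \<exists>N>0. eps_chain g I \<epsilon> x x N)"

definition chain_explosion :: "real set \<Rightarrow> real set \<Rightarrow> (real \<Rightarrow> real \<Rightarrow> real) \<Rightarrow> real \<Rightarrow> real \<Rightarrow> bool" where
  "chain_explosion I J f x l0 \<longleftrightarrow> l0 \<in> J \<and> chain_recurrent (slice f l0) I x \<and>
     (\<exists>r>0. \<exists>\<delta>>0.
        (\<forall>l\<in>J. l0 < l \<and> l < l0 + \<delta> \<longrightarrow> (\<forall>u\<in>ball x r. \<not> chain_recurrent (slice f l) I u)) \<or>
        (\<forall>l\<in>J. l0 - \<delta> < l \<and> l < l0 \<longrightarrow> (\<forall>u\<in>ball x r. \<not> chain_recurrent (slice f l) I u)))"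

end

theory Submission
  imports Defs
begin

text \<open>
  Every point of a homoclinic orbit of a fixed point is chain recurrent: follow the orbit forward
  to the fixed point, then jump back onto the orbit far enough out and follow it again.
  Chain recurrence is forward invariant under a continuous map, and a \<open>C\<^sup>1\<close> family makes
  \<open>(x, \<lambda>) \<mapsto> f\<^sub>\<lambda>\<^sup>m(x)\<close> jointly continuous.  So if \<open>z\<^sub>-\<^sub>k\<close> had chain recurrent points of
  \<open>f\<^sub>\<lambda>\<close> arbitrarily close to it for \<open>\<lambda>\<close> on the exploding side of \<open>\<lambda>\<^sub>0\<close>, their images under
  \<open>f\<^sub>\<lambda>\<^sup>k\<^sup>-\<^sup>L\<close> would be chain recurrent points close to \<open>w = f\<^sub>0\<^sup>k\<^sup>-\<^sup>L(z\<^sub>-\<^sub>k)\<close>, contradicting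
  the explosion at \<open>w\<close>.
\<close>

lemma C1_family_C2_continuous_on:
  assumes "is_interval I" and "C1_family_C2 I J f D1 D2 Dl"
  shows "continuous_on (I \<times> J) (\<lambda>(x, l). f x l)"
proof -
  have Dx: "((\<lambda>x. f x l) has_derivative blinfun_apply (blinfun_mult_right (D1 x l))) (at x within I)"
    and Dl: "((\<lambda>m. f x m) has_derivative (*) (Dl x l)) (at l within J)"
    if "x \<in> I" "l \<in> J" for x l
    using assms(2) that unfolding C1_family_C2_def
    by (auto simp: has_field_derivative_eq_has_derivative_blinfun has_field_derivative_def mult.commute)
  have "continuous_on (J \<times> I) (\<lambda>(l, x). D1 x l)"
    using assms(2) unfolding C1_family_C2_def by (auto intro: continuous_on_swap_args)
  then have "continuous_on (J \<times> I) (\<lambda>(l, x). blinfun_mult_right (D1 x l))"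
    by (auto intro!: continuous_intros simp: split_beta)
  \<comment> \<open>The parameter comes first because the partials lemma needs a convex second domain.\<close>
  then have "continuous_on (J \<times> I) (\<lambda>(l, x). f x l)"
    unfolding continuous_on_eq_continuous_within
    using has_derivative_partialsI[OF Dl Dx] is_interval_convex[OF assms(1)]
    by (force intro: has_derivative_continuous)
  then show ?thesis
    by (rule continuous_on_swap_args)
qed

lemma slice_funpow_in:
  assumes "\<forall>x\<in>I. \<forall>l\<in>J. F x l \<in> I" and "x \<in> I" and "l \<in> J"
  shows "(slice F l ^^ n) x \<in> I"
  using assms by (induction n) (auto simp: slice_def)

lemma continuous_on_slice:
  assumes "continuous_on (I \<times> J) (\<lambda>(x, l). F x l)" and "l \<in> J"
  shows "continuous_on I (slice F l)"
  unfolding slice_def using assms(2)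
  by (intro continuous_on_compose2[OF assms(1), of I "\<lambda>x. (x, l)", simplified]) (auto intro!: continuous_intros)

lemma continuous_on_slice_funpow:
  assumes cont: "continuous_on (I \<times> J) (\<lambda>(x, l). F x l)" and maps: "\<forall>x\<in>I. \<forall>l\<in>J. F x l \<in> I"
  shows "continuous_on (I \<times> J) (\<lambda>(x, l). (slice F l ^^ n) x)"
proof (induction n)
  case (Suc n)
  have "continuous_on (I \<times> J) (\<lambda>p. ((slice F (snd p) ^^ n) (fst p), snd p))"
    using Suc.IH by (auto intro!: continuous_intros simp: split_beta)
  moreover have "(\<lambda>p. ((slice F (snd p) ^^ n) (fst p), snd p)) ` (I \<times> J) \<subseteq> I \<times> J"
    using slice_funpow_in[OF maps] by auto
  ultimately have "continuous_on (I \<times> J) (\<lambda>p. F ((slice F (snd p) ^^ n) (fst p)) (snd p))"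
    using continuous_on_compose2[OF cont, of "I \<times> J" "\<lambda>p. ((slice F (snd p) ^^ n) (fst p), snd p)"]
    by simp
  then show ?case by (simp add: split_beta slice_def)
qed (simp add: continuous_on_fst split_beta)

lemma eps_chain_0 [simp]: "eps_chain g I \<epsilon> x y 0 \<longleftrightarrow> x = y \<and> x \<in> I"
  unfolding eps_chain_def by auto

lemma eps_chain_Suc:
  "eps_chain g I \<epsilon> x y (Suc n) \<longleftrightarrow> x \<in> I \<and> (\<exists>c. \<bar>g x - c\<bar> < \<epsilon> \<and> eps_chain g I \<epsilon> c y n)"
proof
  assume "eps_chain g I \<epsilon> x y (Suc n)"
  then obtain a where "a 0 = x" "a (Suc n) = y" "\<forall>i\<le>Suc n. a i \<in> I" "\<forall>i<Suc n. \<bar>g (a i) - a (Suc i)\<bar> < \<epsilon>"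
    unfolding eps_chain_def by blast
  then show "x \<in> I \<and> (\<exists>c. \<bar>g x - c\<bar> < \<epsilon> \<and> eps_chain g I \<epsilon> c y n)"
    unfolding eps_chain_def by (force intro!: exI[of _ "a 1"] exI[of _ "\<lambda>i. a (Suc i)"])
next
  assume "x \<in> I \<and> (\<exists>c. \<bar>g x - c\<bar> < \<epsilon> \<and> eps_chain g I \<epsilon> c y n)"
  then obtain b where "x \<in> I" "\<bar>g x - b 0\<bar> < \<epsilon>" "b n = y" "\<forall>i\<le>n. b i \<in> I" "\<forall>i<n. \<bar>g (b i) - b (Suc i)\<bar> < \<epsilon>"
    unfolding eps_chain_def by blast
  then show "eps_chain g I \<epsilon> x y (Suc n)"
    unfolding eps_chain_def
    by (intro exI[of _ "case_nat x b"]) (auto split: nat.split)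
qed

lemma eps_chain_append:
  "eps_chain g I \<epsilon> x y N \<Longrightarrow> eps_chain g I \<epsilon> y z M \<Longrightarrow> eps_chain g I \<epsilon> x z (N + M)"
proof (induction N arbitrary: x)
  case (Suc N)
  then show ?case unfolding add_Suc eps_chain_Suc by blast
qed simp

lemma eps_chain_mono:
  assumes "eps_chain g I \<delta> x y N" and "\<delta> \<le> \<epsilon>"
  shows "eps_chain g I \<epsilon> x y N"
proof -
  obtain c where "c 0 = x" "c N = y" "\<forall>i\<le>N. c i \<in> I" "\<forall>i<N. \<bar>g (c i) - c (Suc i)\<bar> < \<delta>"
    using assms(1) unfolding eps_chain_def by blast
  with assms(2) show ?thesis
    unfolding eps_chain_def by (intro exI[of _ c]) (auto intro: less_le_trans)
qed

lemma eps_chain_backward_orbit: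
  assumes "\<And>i. z i \<in> I" and "\<And>i. g (z (Suc i)) = z i" and "\<epsilon> > 0"
  shows "eps_chain g I \<epsilon> (z (i + n)) (z i) n"
proof (induction n)
  case (Suc n)
  have "\<bar>g (z (Suc (i + n))) - z (i + n)\<bar> < \<epsilon>" using assms(2,3) by simp
  then show ?case using Suc.IH assms(1) unfolding eps_chain_Suc add_Suc_right by blast
qed (simp add: assms)

lemma funpow_backward_orbit:
  assumes "\<And>i. g (z (Suc i)) = z i"
  shows "(g ^^ n) (z (i + n)) = z i"
  by (induction n) (simp_all add: funpow_Suc_right assms del: funpow.simps)

lemma chain_recurrent_image:
  assumes cont: "continuous_on I g" and maps: "g ` I \<subseteq> I" and cr: "chain_recurrent g I u"
  shows "chain_recurrent g I (g u)"
  unfolding chain_recurrent_def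
proof (intro conjI allI impI)
  have "u \<in> I" using cr unfolding chain_recurrent_def by blast
  then show gu: "g u \<in> I" using maps by blast
  fix \<epsilon> :: real assume "\<epsilon> > 0"
  then obtain d where "d > 0" and d: "\<And>x. x \<in> I \<Longrightarrow> dist x (g u) < d \<Longrightarrow> dist (g x) (g (g u)) < \<epsilon>/2"
    using cont gu unfolding continuous_on_iff by (metis half_gt_zero)
  define \<delta> where "\<delta> = min d (\<epsilon>/2)"
  have "\<delta> > 0" using \<open>d > 0\<close> \<open>\<epsilon> > 0\<close> by (simp add: \<delta>_def)
  then obtain N where "N > 0" and "eps_chain g I \<delta> u u N"
    using cr unfolding chain_recurrent_def by blast
  \<comment> \<open>Doubling the chain ensures two steps, so its first point can be replaced by g u.\<close>
  then have "eps_chain g I \<delta> u u (Suc (Suc (N + N - 2)))"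
    using eps_chain_append[of g I \<delta> u u N u N] by (simp add: Suc_diff_Suc numeral_2_eq_2)
  then obtain c1 c2 where "\<bar>g u - c1\<bar> < \<delta>" "c1 \<in> I" "\<bar>g c1 - c2\<bar> < \<delta>"
      and rest: "eps_chain g I \<delta> c2 u (N + N - 2)"
    unfolding eps_chain_Suc by blast
  then have "\<bar>g (g u) - g c1\<bar> < \<epsilon>/2" "\<bar>g c1 - c2\<bar> < \<epsilon>/2"
    using d[of c1] by (auto simp: \<delta>_def dist_real_def abs_minus_commute)
  then have "\<bar>g (g u) - c2\<bar> < \<epsilon>" by linarith
  then have "eps_chain g I \<epsilon> (g u) u (Suc (N + N - 2))"
    using gu eps_chain_mono[OF rest, of \<epsilon>] unfolding eps_chain_Suc \<delta>_def by auto
  moreover have "eps_chain g I \<epsilon> u (g u) 1"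
    using \<open>u \<in> I\<close> gu \<open>\<epsilon> > 0\<close> by (simp add: eps_chain_Suc)
  ultimately show "\<exists>N>0. eps_chain g I \<epsilon> (g u) (g u) N"
    using eps_chain_append by blast
qed

lemma chain_recurrent_funpow:
  assumes "continuous_on I g" and "g ` I \<subseteq> I" and "chain_recurrent g I u"
  shows "chain_recurrent g I ((g ^^ n) u)"
  by (induction n) (simp_all add: assms chain_recurrent_image)

lemma homoclinic_orbit_chain_recurrent:
  assumes orb: "homoclinic_orbit g I x0 z" and fixed: "g x0 = x0"
  shows "chain_recurrent g I (z k)"
  unfolding chain_recurrent_def
proof (intro conjI allI impI)
  have zI: "\<And>i. z i \<in> I" and step: "\<And>i. g (z (Suc i)) = z i" and "z 0 = x0" and "z \<longlonglongrightarrow> x0"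
    using orb unfolding homoclinic_orbit_def by auto
  show "z k \<in> I" by (rule zI)
  fix \<epsilon> :: real assume "\<epsilon> > 0"
  then obtain j where "j \<ge> k" and "\<bar>z j - x0\<bar> < \<epsilon>"
    using \<open>z \<longlonglongrightarrow> x0\<close> unfolding LIMSEQ_iff by (metis nle_le real_norm_def)
  have "eps_chain g I \<epsilon> (z k) x0 k"
    using eps_chain_backward_orbit[where z = z and g = g and i = 0 and n = k, OF zI step \<open>\<epsilon> > 0\<close>] \<open>z 0 = x0\<close> by simp
  moreover have "eps_chain g I \<epsilon> x0 (z j) 1"
    using fixed zI \<open>z 0 = x0\<close> \<open>\<bar>z j - x0\<bar> < \<epsilon>\<close> by (auto simp: eps_chain_Suc abs_minus_commute)
  moreover have "eps_chain g I \<epsilon> (z j) (z k) (j - k)"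
    using eps_chain_backward_orbit[where z = z and g = g and i = k and n = "j - k", OF zI step \<open>\<epsilon> > 0\<close>] \<open>j \<ge> k\<close> by simp
  ultimately show "\<exists>N>0. eps_chain g I \<epsilon> (z k) (z k) N"
    using eps_chain_append by (metis add_gr_0 zero_less_one)
qed

lemma chain_explosion_funpow_preimage:
  fixes F :: "real \<Rightarrow> real \<Rightarrow> real"
  assumes cont: "continuous_on (I \<times> J) (\<lambda>(x, l). F x l)" and maps: "\<forall>x\<in>I. \<forall>l\<in>J. F x l \<in> I"
    and cr: "chain_recurrent (slice F l0) I v"
    and expl: "chain_explosion I J F ((slice F l0 ^^ n) v) l0"
  shows "chain_explosion I J F v l0"
proof -
  define w where "w = (slice F l0 ^^ n) v"
  define quiet where "quiet x \<rho> l \<longleftrightarrow> (\<forall>u\<in>ball x \<rho>. \<not> chain_recurrent (slice F l) I u)" for x \<rho> l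
  obtain r \<delta> where "l0 \<in> J" "r > 0" "\<delta> > 0" and side:
    "(\<forall>l\<in>J. l0 < l \<and> l < l0 + \<delta> \<longrightarrow> quiet w r l) \<or> (\<forall>l\<in>J. l0 - \<delta> < l \<and> l < l0 \<longrightarrow> quiet w r l)"
    using expl unfolding chain_explosion_def w_def quiet_def by blast
  have "v \<in> I" using cr unfolding chain_recurrent_def by blast
  then have "continuous (at (v, l0) within I \<times> J) (\<lambda>(x, l). (slice F l ^^ n) x)"
    using continuous_on_slice_funpow[OF cont maps] \<open>l0 \<in> J\<close>
    by (simp add: continuous_on_eq_continuous_within)
  then obtain d where "d > 0" and near:
    "\<And>x l. (x, l) \<in> I \<times> J \<Longrightarrow> dist (x, l) (v, l0) < d \<Longrightarrow> dist ((slice F l ^^ n) x) w < r"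
    unfolding continuous_within_eps_delta w_def using \<open>r > 0\<close> by fastforce
  have escape: "quiet v (d/2) l" if "l \<in> J" and "\<bar>l - l0\<bar> < d/2" and "quiet w r l" for l
    unfolding quiet_def
  proof (intro ballI notI)
    fix u assume "u \<in> ball v (d/2)" and cr_u: "chain_recurrent (slice F l) I u"
    have "u \<in> I" using cr_u unfolding chain_recurrent_def by blast
    have "dist (u, l) (v, l0) \<le> \<bar>dist u v\<bar> + \<bar>dist l l0\<bar>"
      unfolding dist_Pair_Pair by (rule sqrt_sum_squares_le_sum_abs)
    also have "\<dots> < d"
      using \<open>u \<in> ball v (d/2)\<close> \<open>\<bar>l - l0\<bar> < d/2\<close> by (simp add: dist_real_def abs_minus_commute)
    finally have "(slice F l ^^ n) u \<in> ball w r"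
      using near \<open>u \<in> I\<close> \<open>l \<in> J\<close> by (simp add: dist_commute)
    have "slice F l ` I \<subseteq> I" using maps \<open>l \<in> J\<close> by (auto simp: slice_def)
    then have "chain_recurrent (slice F l) I ((slice F l ^^ n) u)"
      by (rule chain_recurrent_funpow[OF continuous_on_slice[OF cont \<open>l \<in> J\<close>] _ cr_u])
    with \<open>(slice F l ^^ n) u \<in> ball w r\<close> \<open>quiet w r l\<close> show False unfolding quiet_def by blast
  qed
  have "(\<forall>l\<in>J. l0 < l \<and> l < l0 + min \<delta> (d/2) \<longrightarrow> quiet v (d/2) l) \<or>
        (\<forall>l\<in>J. l0 - min \<delta> (d/2) < l \<and> l < l0 \<longrightarrow> quiet v (d/2) l)"
    using side by (elim disjE) (use escape in \<open>fastforce simp: abs_less_iff\<close>)+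
  moreover have "d/2 > 0" "min \<delta> (d/2) > 0" using \<open>\<delta> > 0\<close> \<open>d > 0\<close> by simp_all
  ultimately show ?thesis
    unfolding chain_explosion_def using \<open>l0 \<in> J\<close> cr unfolding quiet_def by blast
qed

theorem mainTheorem9:
  fixes I J :: "real set" and f D1 D2 Dl :: "real \<Rightarrow> real \<Rightarrow> real"
    and l0 y w :: real and xs :: "real \<Rightarrow> real" and z :: "nat \<Rightarrow> real" and L :: nat
  assumes intI: "is_interval I" and neI: "interior I \<noteq> {}"
    and intJ: "is_interval J" and l0J: "l0 \<in> interior J"
    and maps: "\<forall>x\<in>I. \<forall>l\<in>J. f x l \<in> I"
    and H1: "C1_family_C2 I J f D1 D2 Dl"
    and H2: "not_const_on_intervals (slice f l0) I"
    and H3: "H3 I J f D1 l0"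
    and H4a: "\<forall>l\<in>J. xs l \<in> I \<and> f (xs l) l = xs l \<and> \<bar>D1 (xs l) l\<bar> > 1"
    and H4b: "homoclinic_point (slice f l0) I (xs l0) y"
    and H5: "\<exists>zy K. homoclinic_orbit (slice f l0) I (xs l0) zy \<and> zy K = y \<and>
               card (range zy \<inter> {c \<in> I. D1 c l0 = 0}) = 1"
    and H6: "homoclinic_orbit (slice f l0) I (xs l0) z" "w = z L" "D1 w l0 = 0"
    and expl: "chain_explosion I J f w l0"
  shows "\<forall>k\<ge>L. chain_explosion I J f (z k) l0"
proof (intro allI impI)
  fix k assume "k \<ge> L"
  have "l0 \<in> J" using l0J interior_subset by blast
  have orbit: "\<And>i. slice f l0 (z (Suc i)) = z i"
    using H6(1) unfolding homoclinic_orbit_def by blast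
  have "(slice f l0 ^^ (k - L)) (z k) = w"
    using funpow_backward_orbit[where z = z and i = L and n = "k - L", OF orbit] H6(2) \<open>k \<ge> L\<close> by simp
  moreover have "chain_recurrent (slice f l0) I (z k)"
    using homoclinic_orbit_chain_recurrent[OF H6(1)] H4a \<open>l0 \<in> J\<close> by (simp add: slice_def)
  ultimately show "chain_explosion I J f (z k) l0"
    using chain_explosion_funpow_preimage[OF C1_family_C2_continuous_on[OF intI H1] maps] expl by blast
qed

end
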